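(* Let $\lambda\in\mathbf{C}$ with $\lambda\neq1$, let $r,n\in\mathbf{Z}_{+}$ (nonnegative integers), and let $p(x)\in\mathbb{P}_{n}(\lambda)$ be written as $p(x)=\sum_{k=0}^{n}C_{k}H_{k}^{(r)}(x\vert\lambda)$ with $C_{k}\in\mathbf{Q}(\lambda)$. Then for each $k=0,\dots,n$, \[ C_{k}=\frac{1}{(1-\lambda)^{r}k!}\sum_{j=0}^{r}\binom{r}{j}(-\lambda)^{r-j}D^{k}p(j), \] that is, \[ p(x)=\frac{1}{(1-\lambda)^{r}}\sum_{k=0}^{n}\Bigl(\sum_{j=0}^{r}\frac{1}{k!}\binom{r}{j}(-\lambda)^{r-j}D^{k}p(j)\Bigr)H_{k}^{(r)}(x\vert\lambda). \]
   Context: For $\lambda\in\mathbf{C}$, $\lambda\neq1$, and $r\in\mathbf{Z}_{+}$, the Frobenius–Euler polynomials of order $r$ are defined by $\left(\frac{1-\lambda}{e^{t}-\lambda}\right)^{r}e^{xt}=\sum_{n=0}^{\infty}H_{n}^{(r)}(x\vert\lambda)\frac{t^{n}}{n!}$; each $H_n^{(r)}(x\vert\lambda)$ is monic of degree $n$ with coefficients in $\mathbf{Q}(\lambda)$. $\mathbb{P}_{n}(\lambda)$ is the $\mathbf{Q}(\lambda)$-vector space of polynomials in $x$ with coefficients in $\mathbf{Q}(\lambda)$ of degree at most $n$, and $\{H_0^{(r)}(x\vert\lambda),\dots,H_n^{(r)}(x\vert\lambda)\}$ is a basis of it. $D$ denotes differentiation $d/dx$, and $D^kp(j)$ is the $k$-th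 derivative of $p$ evaluated at $x=j$. *)

theory Defs
  imports Complex_Main "HOL-Computational_Algebra.Computational_Algebra"
begin

text \<open>The field Q(lam) inside the complex numbers: values at lam of rational functions
  with rational coefficients.\<close>
definition Q_adj :: "complex \<Rightarrow> complex set" where
  "Q_adj lam = {poly (map_poly of_rat f) lam / poly (map_poly of_rat g) lam | f g.
                 poly (map_poly of_rat g) lam \<noteq> 0}"

definition FE_factor :: "complex \<Rightarrow> nat \<Rightarrow> complex fps" where
  "FE_factor lam r = (fps_const (1 - lam) / (fps_exp 1 - fps_const lam)) ^ r"

text \<open>Frobenius--Euler polynomial H_n^{(r)}(x|lam): n! times the coefficient of t^n in
  ((1 - lam)/(e^t - lam))^r e^{xt}, computed in the power series ring over complex[x].\<close>
definition frobenius_euler :: "nat \<Rightarrow> nat \<Rightarrow> complex \<Rightarrow> complex poly" where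
  "frobenius_euler r n lam =
     smult (fact n)
       (fps_nth (Abs_fps (\<lambda>m. [: fps_nth (FE_factor lam r) m :])
                 * Abs_fps (\<lambda>m. smult (1 / fact m) (monom 1 m))) n)"

end

theory Submission imports Defs begin

text \<open>The Appell sequence of a power series A(t) has generating function A(t) e^{xt}, and
  H_n^{(r)}(x|lam) / n! is the Appell sequence of ((1-lam)/(e^t-lam))^r. Differentiation lowers
  the index of an Appell polynomial by one, and evaluating at x = j amounts to multiplying A by
  e^{jt}. Hence the functional q \<mapsto> \<Sum>_j binom(r,j) (-lam)^(r-j) q(j) sends the m-th Appell
  polynomial to the m-th coefficient of (e^t - lam)^r A(t), which for the Frobenius--Euler
  series is the constant (1-lam)^r. Applying it to D^k p isolates (1-lam)^r k! C_k.\<close>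

definition appell_poly :: "'a::field_char_0 fps \<Rightarrow> nat \<Rightarrow> 'a poly" where
  "appell_poly A n = (\<Sum>d\<le>n. monom (A $ (n - d) / fact d) d)"

lemma poly_appell_poly: "poly (appell_poly A n) x = (fps_exp x * A) $ n"
proof -
  have "poly (appell_poly A n) x = (\<Sum>d\<le>n. x ^ d / fact d * A $ (n - d))"
    by (simp add: appell_poly_def poly_sum poly_monom field_simps)
  also have "\<dots> = (fps_exp x * A) $ n"
    by (simp add: fps_mult_nth atLeast0AtMost)
  finally show ?thesis .
qed

lemma appell_poly_0: "appell_poly A 0 = [:A $ 0:]"
  by (simp add: appell_poly_def monom_0)

lemma pderiv_appell_poly:
  fixes A :: "'a::field_char_0 fps"
  shows "pderiv (appell_poly A (Suc n)) = appell_poly A n"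
proof -
  have "pderiv (appell_poly A (Suc n)) =
      (\<Sum>d\<le>Suc n. monom (of_nat d * (A $ (Suc n - d) / fact d)) (d - 1))"
    unfolding appell_poly_def higher_pderiv_sum[of 1, simplified] by (simp add: pderiv_monom)
  also have "\<dots> = (\<Sum>d\<le>n. monom (of_nat (Suc d) * (A $ (n - d) / fact (Suc d))) d)"
    by (subst sum.atMost_Suc_shift) simp
  also have "\<dots> = appell_poly A n"
    unfolding appell_poly_def
    by (intro sum.cong refl) (simp add: fact_Suc field_simps del: of_nat_Suc)
  finally show ?thesis .
qed

lemma higher_pderiv_appell_poly:
  fixes A :: "'a::field_char_0 fps"
  shows "(pderiv ^^ k) (appell_poly A m) = (if k \<le> m then appell_poly A (m - k) else 0)"
proof (induction k)
  case 0
  then show ?case by simp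
next
  case (Suc k)
  show ?case
  proof (cases "Suc k \<le> m")
    case True
    then have "m - k = Suc (m - Suc k)" by simp
    with True Suc.IH show ?thesis by (simp add: pderiv_appell_poly)
  next
    case False
    with Suc.IH show ?thesis by (auto simp: appell_poly_0 pderiv_pCons)
  qed
qed

lemma frobenius_euler_eq_appell_poly:
  "frobenius_euler r n lam = smult (fact n) (appell_poly (FE_factor lam r) n)"
proof -
  have "fps_nth (Abs_fps (\<lambda>m. [: FE_factor lam r $ m :])
                 * Abs_fps (\<lambda>m. smult (1 / fact m) (monom 1 m))) n
      = (\<Sum>i=0..n. monom (FE_factor lam r $ i / fact (n - i)) (n - i))"
    by (simp add: fps_mult_nth smult_monom)
  also have "\<dots> = appell_poly (FE_factor lam r) n"
    unfolding appell_poly_def atLeast0AtMost[symmetric]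
    by (subst sum.atLeastAtMost_rev) simp
  finally show ?thesis
    unfolding frobenius_euler_def by simp
qed

lemma fps_exp_minus_const_power:
  "(fps_exp 1 - fps_const (lam::'a::field_char_0)) ^ r =
     (\<Sum>j\<le>r. fps_const (of_nat (r choose j) * (- lam) ^ (r - j)) * fps_exp (of_nat j))"
proof -
  have "(fps_exp 1 - fps_const lam) ^ r = (fps_exp 1 + fps_const (- lam)) ^ r"
    by (simp only: diff_conv_add_uminus fps_const_neg)
  also have "\<dots> = (\<Sum>j\<le>r. of_nat (r choose j) * fps_exp 1 ^ j * fps_const (- lam) ^ (r - j))"
    by (rule binomial_ring)
  also have "\<dots> = (\<Sum>j\<le>r. fps_const (of_nat (r choose j) * (- lam) ^ (r - j)) * fps_exp (of_nat j))"
    by (intro sum.cong refl)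
       (simp only: fps_const_mult[symmetric] fps_of_nat fps_exp_power_mult fps_const_power
          mult_1_left mult_ac)
  finally show ?thesis .
qed

lemma fps_exp_minus_const_power_mult_FE_factor:
  assumes "lam \<noteq> 1"
  shows "(fps_exp 1 - fps_const lam) ^ r * FE_factor lam r = fps_const ((1 - lam) ^ r)"
proof -
  let ?Y = "fps_exp 1 - fps_const lam"
  have "?Y $ 0 \<noteq> 0" using assms by simp
  then have "?Y * (fps_const (1 - lam) / ?Y) = fps_const (1 - lam)"
    by (simp add: fps_divide_unit inverse_mult_eq_1' mult.left_commute[of ?Y])
  then show ?thesis
    unfolding FE_factor_def by (simp add: power_mult_distrib[symmetric])
qed

definition FE_functional :: "'a::field_char_0 \<Rightarrow> nat \<Rightarrow> 'a poly \<Rightarrow> 'a" where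
  "FE_functional lam r q = (\<Sum>j=0..r. of_nat (r choose j) * (- lam) ^ (r - j) * poly q (of_nat j))"

lemma FE_functional_sum: "FE_functional lam r (sum f A) = (\<Sum>x\<in>A. FE_functional lam r (f x))"
  unfolding FE_functional_def poly_sum sum_distrib_left by (rule sum.swap)

lemma FE_functional_smult: "FE_functional lam r (smult c q) = c * FE_functional lam r q"
  unfolding FE_functional_def sum_distrib_left by (simp add: mult_ac)

lemma FE_functional_0 [simp]: "FE_functional lam r 0 = 0"
  by (simp add: FE_functional_def)

lemma FE_functional_appell_poly:
  "FE_functional lam r (appell_poly A m) = ((fps_exp 1 - fps_const lam) ^ r * A) $ m"
  unfolding FE_functional_def poly_appell_poly fps_exp_minus_const_power
  by (simp add: sum_distrib_right fps_sum_nth atLeast0AtMost mult.assoc)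

lemma FE_functional_FE_appell_poly:
  assumes "lam \<noteq> 1"
  shows "FE_functional lam r (appell_poly (FE_factor lam r) m) = (if m = 0 then (1 - lam) ^ r else 0)"
  unfolding FE_functional_appell_poly fps_exp_minus_const_power_mult_FE_factor[OF assms] by simp

theorem theorem5:
  fixes lam :: complex and r n :: nat and p :: "complex poly" and C :: "nat \<Rightarrow> complex"
  assumes "lam \<noteq> 1"
    and "\<forall>i. coeff p i \<in> Q_adj lam"
    and "\<forall>k\<le>n. C k \<in> Q_adj lam"
    and "p = (\<Sum>k=0..n. smult (C k) (frobenius_euler r k lam))"
  shows "\<forall>k\<le>n. C k = 1 / ((1 - lam) ^ r * fact k) *
           (\<Sum>j=0..r. of_nat (r choose j) * (- lam) ^ (r - j) * poly ((pderiv ^^ k) p) (of_nat j))"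
proof (intro allI impI)
  fix k assume "k \<le> n"
  let ?L = "FE_functional lam r" and ?H = "appell_poly (FE_factor lam r)"
  have "?L ((pderiv ^^ k) p) =
      (\<Sum>m=0..n. C m * fact m * ?L (if k \<le> m then ?H (m - k) else 0))"
    unfolding assms(4) frobenius_euler_eq_appell_poly higher_pderiv_sum higher_pderiv_smult
      higher_pderiv_appell_poly FE_functional_sum FE_functional_smult by (simp add: mult.assoc)
  also have "\<dots> = (\<Sum>m=0..n. if m = k then C k * fact k * (1 - lam) ^ r else 0)"
    by (intro sum.cong refl)
       (auto simp: FE_functional_FE_appell_poly[OF assms(1)])
  also have "\<dots> = C k * fact k * (1 - lam) ^ r"
    using \<open>k \<le> n\<close> by simp
  finally show "C k = 1 / ((1 - lam) ^ r * fact k) *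
      (\<Sum>j=0..r. of_nat (r choose j) * (- lam) ^ (r - j) * poly ((pderiv ^^ k) p) (of_nat j))"
    using assms(1) unfolding FE_functional_def by (simp add: field_simps)
qed

end
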